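(* For every integer $r\ge 0$, there do not exist $x,y,z,w\in\mathbb{N}=\{0,1,2,\dots\}$ such that $$x^2+y^2+z^2+w^2=4^{2r+1}\cdot 6\quad\text{and}\quad 3x+10y\in\mathcal{S}.$$
   Context: $\mathcal{S}=\{x^2: x\in\mathbb{Z}\}$ denotes the set of integer squares. (Note that $(a,b)=(3,10)$ satisfies $\gcd(a,b)=1$ and $a^2+b^2=109$ is prime, so this shows that the hypothesis $\operatorname{ord}_2(n)\le C$ cannot be dropped from the statement that sufficiently large $n$ admit such a representation.) *)

theory Defs
  imports Main
begin

definition int_squares :: "int set" where
  "int_squares = {x^2 | x. x \<in> (\<int>::int set)}"

end

theory Submission
  imports Defs "HOL-Number_Theory.Pocklington"
begin

text \<open>
  Squares are 0, 1 or 4 modulo 8, so a sum of four squares divisible by 8 has all four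
  roots even. Halving repeatedly, every representation of \<open>4\<^sup>k \<cdot> 6\<close> as a sum of four
  squares is \<open>2\<^sup>k\<close> times a representation of 6, i.e. a permutation of \<open>(2,1,1,0)\<close>.
  For \<open>k = 2r + 1\<close> this gives \<open>3x + 10y = 4\<^sup>r \<cdot> 2(3a + 10b)\<close> with \<open>a, b \<le> 2\<close>, and none
  of the finitely many values of \<open>2(3a + 10b)\<close> is a square.
\<close>

lemma even_square_mod_8: "even (x::nat) \<Longrightarrow> x\<^sup>2 mod 8 \<in> {0, 4}"
proof (elim evenE)
  fix b assume "x = 2 * b"
  then have "x\<^sup>2 mod 8 = 4 * (b\<^sup>2 mod 2)"
    by (simp add: power_mult_distrib mult_mod_right)
  then show ?thesis
    by (cases "even (b\<^sup>2)") (auto simp: even_iff_mod_2_eq_zero)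
qed

lemma square_mod_8_cases: "(x::nat)\<^sup>2 mod 8 \<in> {0, 1, 4}"
  using even_square_mod_8[of x] square_mod_8_eq_1_iff[of x] by (auto simp: cong_def)

lemma even_if_8_dvd_sum_four_squares:
  fixes x y z w :: nat
  assumes "8 dvd x\<^sup>2 + y\<^sup>2 + z\<^sup>2 + w\<^sup>2"
  shows "even x"
proof (rule ccontr)
  have no_zero: "(1 + A + B + C) mod 8 \<noteq> 0"
    if "A \<in> {0, 1, 4}" "B \<in> {0, 1, 4}" "C \<in> {0, 1, 4}" for A B C :: nat
    using that by (elim insertE emptyE) simp_all
  assume "odd x"
  then have "x\<^sup>2 mod 8 = 1"
    by (simp add: square_mod_8_eq_1_iff[symmetric] cong_def)
  moreover have "[x\<^sup>2 mod 8 + y\<^sup>2 mod 8 + z\<^sup>2 mod 8 + w\<^sup>2 mod 8 = x\<^sup>2 + y\<^sup>2 + z\<^sup>2 + w\<^sup>2] (mod 8)"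
    by (intro cong_add) (simp_all add: cong_def)
  ultimately have "(1 + y\<^sup>2 mod 8 + z\<^sup>2 mod 8 + w\<^sup>2 mod 8) mod 8 = 0"
    using assms unfolding cong_def dvd_eq_mod_eq_0 by metis
  then show False
    using no_zero[OF square_mod_8_cases[of y] square_mod_8_cases[of z] square_mod_8_cases[of w]]
    by contradiction
qed

lemma all_even_if_8_dvd_sum_four_squares:
  fixes x y z w :: nat
  assumes "8 dvd x\<^sup>2 + y\<^sup>2 + z\<^sup>2 + w\<^sup>2"
  shows "even x \<and> even y \<and> even z \<and> even w"
  using even_if_8_dvd_sum_four_squares[of x y z w] even_if_8_dvd_sum_four_squares[of y x z w]
    even_if_8_dvd_sum_four_squares[of z x y w] even_if_8_dvd_sum_four_squares[of w x y z] assms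
  by (simp add: ac_simps)

lemma sum_four_squares_4_pow_descent:
  fixes x y z w n :: nat
  assumes "even n" and "x\<^sup>2 + y\<^sup>2 + z\<^sup>2 + w\<^sup>2 = 4 ^ k * n"
  shows "\<exists>a b c d. x = 2 ^ k * a \<and> y = 2 ^ k * b \<and> z = 2 ^ k * c \<and> w = 2 ^ k * d \<and>
    a\<^sup>2 + b\<^sup>2 + c\<^sup>2 + d\<^sup>2 = n"
  using assms(2)
proof (induction k arbitrary: x y z w)
  case 0
  then show ?case by auto
next
  case (Suc k)
  have "8 dvd x\<^sup>2 + y\<^sup>2 + z\<^sup>2 + w\<^sup>2"
    using Suc.prems \<open>even n\<close> by (auto simp: mult_dvd_mono)
  then obtain x' y' z' w' where halves: "x = 2 * x'" "y = 2 * y'" "z = 2 * z'" "w = 2 * w'"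
    using all_even_if_8_dvd_sum_four_squares by (meson evenE)
  then have "x'\<^sup>2 + y'\<^sup>2 + z'\<^sup>2 + w'\<^sup>2 = 4 ^ k * n"
    using Suc.prems by (simp add: power_mult_distrib)
  then obtain a b c d where "x' = 2 ^ k * a" "y' = 2 ^ k * b" "z' = 2 ^ k * c" "w' = 2 ^ k * d"
    and "a\<^sup>2 + b\<^sup>2 + c\<^sup>2 + d\<^sup>2 = n"
    using Suc.IH by blast
  with halves show ?case
    by (metis mult.assoc power_Suc)
qed

lemma square_if_square_mult_eq_square:
  fixes c n t :: nat
  assumes "c > 0" and "c\<^sup>2 * n = t\<^sup>2"
  shows "\<exists>s. n = s\<^sup>2"
proof -
  have "c\<^sup>2 dvd t\<^sup>2"
    using assms(2) by (metis dvd_triv_left)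
  then have "c dvd t"
    by simp
  then obtain s where "t = c * s" ..
  then have "n = s\<^sup>2"
    using assms by (simp add: power_mult_distrib)
  then show ?thesis ..
qed

lemma int_mem_int_squares_iff: "int n \<in> int_squares \<longleftrightarrow> (\<exists>s. n = s\<^sup>2)"
proof
  assume "int n \<in> int_squares"
  then obtain t :: int where "int n = t\<^sup>2"
    unfolding int_squares_def by blast
  then have "int n = int ((nat \<bar>t\<bar>)\<^sup>2)"
    by simp
  then show "\<exists>s. n = s\<^sup>2"
    by (metis of_nat_eq_iff)
next
  assume "\<exists>s. n = s\<^sup>2"
  then show "int n \<in> int_squares"
    unfolding int_squares_def by auto
qed

lemma double_not_square_if_sum_four_squares_eq_6:
  fixes a b c d s :: nat
  assumes "a\<^sup>2 + b\<^sup>2 + c\<^sup>2 + d\<^sup>2 = 6"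
  shows "2 * (3 * a + 10 * b) \<noteq> s\<^sup>2"
proof
  assume s: "2 * (3 * a + 10 * b) = s\<^sup>2"
  have root_bound: "u \<in> {0, 1, 2}" if "u\<^sup>2 \<le> 6" for u :: nat
  proof -
    have "u < 3"
      using that power_less_imp_less_base[of u 2 3] by simp
    then show ?thesis
      by auto
  qed
  have "a \<in> {0, 1, 2}" "b \<in> {0, 1, 2}" "c \<in> {0, 1, 2}" "d \<in> {0, 1, 2}"
    using assms by (intro root_bound; linarith)+
  then have "3 * a + 10 * b \<in> {3, 6, 10, 13, 16, 20, 23}"
    using assms by auto
  moreover from this have "s < 7"
    using s power_less_imp_less_base[of s 2 7] by auto
  moreover have "2 * v \<noteq> u\<^sup>2" if "v \<in> {3, 6, 10, 13, 16, 20, 23}" "u < 7" for u v :: nat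
  proof -
    have "u \<in> {0, 1, 2, 3, 4, 5, 6}"
      using \<open>u < 7\<close> by auto
    with that(1) show ?thesis
      by (auto simp: power2_eq_square)
  qed
  ultimately show False
    using s by blast
qed

theorem mainTheorem3:
  fixes r :: nat
  shows "\<not> (\<exists>x y z w :: nat.
            x^2 + y^2 + z^2 + w^2 = 4^(2*r+1) * 6 \<and>
            int (3*x + 10*y) \<in> int_squares)"
proof
  assume "\<exists>x y z w :: nat.
            x^2 + y^2 + z^2 + w^2 = 4^(2*r+1) * 6 \<and>
            int (3*x + 10*y) \<in> int_squares"
  then obtain x y z w :: nat where sum: "x\<^sup>2 + y\<^sup>2 + z\<^sup>2 + w\<^sup>2 = 4 ^ (2 * r + 1) * 6"
    and square: "int (3 * x + 10 * y) \<in> int_squares"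
    by blast
  obtain a b c d where xy: "x = 2 ^ (2 * r + 1) * a" "y = 2 ^ (2 * r + 1) * b"
    and six: "a\<^sup>2 + b\<^sup>2 + c\<^sup>2 + d\<^sup>2 = 6"
    using sum_four_squares_4_pow_descent[OF _ sum] by auto
  have "(2::nat) ^ (2 * r + 1) = (2 ^ r)\<^sup>2 * 2"
    by (simp add: power_mult[symmetric] mult.commute)
  then have "(2 ^ r)\<^sup>2 * (2 * (3 * a + 10 * b)) = 3 * x + 10 * y"
    using xy by (simp add: algebra_simps)
  moreover obtain t where "3 * x + 10 * y = t\<^sup>2"
    using square int_mem_int_squares_iff by blast
  ultimately obtain s where "2 * (3 * a + 10 * b) = s\<^sup>2"
    using square_if_square_mult_eq_square[of "2 ^ r"] by auto
  then show False
    using double_not_square_if_sum_four_squares_eq_6[OF six] by blast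
qed

end
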